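(* Let $X$ be a $T_1$ space and $\mathcal{P}$ an ideal of closed subsets of $X$. Let $\mathcal{P}'$ be the ideal of all closed subsets of $X$ contained in the set of isolated points of $X$. Then $C(X)_\mathcal{P}=C(X)$ if and only if $\mathcal{P}\subseteq\mathcal{P}'$.
   Context: An ideal of closed subsets of $X$ is a family $\mathcal{P}$ of closed subsets closed under finite unions and under passing to closed subsets. $D_f$ is the set of discontinuity points of $f\in\mathbb{R}^X$; $C(X)_\mathcal{P}=\{f\in\mathbb{R}^X\colon\overline{D_f}\in\mathcal{P}\}$; $C(X)$ is the ring of continuous real-valued functions on $X$. *)

theory Defs
  imports "HOL-Analysis.Analysis"
begin

text \<open>The space X is the whole carrier (UNIV) of a type of class t1_space.\<close>

definition discont_points :: "('a::topological_space \<Rightarrow> real) \<Rightarrow> 'a set" where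
  "discont_points f = {x. \<not> (f \<longlongrightarrow> f x) (at x)}"

definition closed_ideal :: "'a::topological_space set set \<Rightarrow> bool" where
  "closed_ideal P \<longleftrightarrow> (\<forall>A\<in>P. closed A) \<and> {} \<in> P \<and>
     (\<forall>A\<in>P. \<forall>B\<in>P. A \<union> B \<in> P) \<and>
     (\<forall>A\<in>P. \<forall>B. closed B \<and> B \<subseteq> A \<longrightarrow> B \<in> P)"

definition isolated_points :: "'a::topological_space set" where
  "isolated_points = {x. x isolated_in UNIV}"

definition isolated_ideal :: "'a::topological_space set set" where
  "isolated_ideal = {A. closed A \<and> A \<subseteq> isolated_points}"

definition C_ideal :: "'a::topological_space set set \<Rightarrow> ('a \<Rightarrow> real) set" where
  "C_ideal P = {f. closure (discont_points f) \<in> P}"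

definition C_cont :: "('a::topological_space \<Rightarrow> real) set" where
  "C_cont = {f. continuous_on UNIV f}"

end

theory Submission
  imports Defs
begin

text \<open>A function is continuous at every isolated point, so if every member of \<open>P\<close> consists of
  isolated points, every \<open>f\<close> with \<open>closure D\<^sub>f \<in> P\<close> has \<open>D\<^sub>f = {}\<close>.
  Conversely, if some member of \<open>P\<close> contains a non-isolated point \<open>x\<close>, then the indicator of
  \<open>{x}\<close> is discontinuous exactly at \<open>x\<close> (here \<open>T\<^sub>1\<close> makes \<open>{x}\<close> closed), so it lies in
  \<open>C(X)\<^sub>P\<close> without being continuous.\<close>

lemma isolated_points_iff_at_eq_bot: "x \<in> isolated_points \<longleftrightarrow> at x = bot"
  by (auto simp: isolated_points_def isolated_in_def at_eq_bot_iff)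

lemma discont_points_disjoint_isolated_points: "discont_points f \<inter> isolated_points = {}"
  by (auto simp: isolated_points_iff_at_eq_bot discont_points_def)

lemma C_cont_iff_discont_points_empty: "f \<in> C_cont \<longleftrightarrow> discont_points f = {}"
  by (auto simp: C_cont_def discont_points_def continuous_on_def)

lemma tendsto_indicator_singleton_at:
  fixes x :: "'a::t1_space"
  shows "(indicator {x} \<longlongrightarrow> (0::real)) (at y)"
  using eventually_neq_at_within[of x y UNIV] by (rule tendsto_eventually[OF eventually_mono]) simp

lemma discont_points_indicator_singleton:
  fixes x :: "'a::t1_space"
  shows "discont_points (indicator {x} :: 'a \<Rightarrow> real) = {x} - isolated_points"
proof (rule set_eqI)
  fix y
  show "y \<in> discont_points (indicator {x} :: 'a \<Rightarrow> real) \<longleftrightarrow> y \<in> {x} - isolated_points"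
    using tendsto_indicator_singleton_at[of x y] tendsto_unique[of "at y" "indicator {x}" "0::real" 1]
    by (cases "y = x"; cases "at y = bot") (auto simp: discont_points_def isolated_points_iff_at_eq_bot)
qed

lemma closed_ideal_closed: "closed_ideal P \<Longrightarrow> A \<in> P \<Longrightarrow> closed A"
  by (simp add: closed_ideal_def)

lemma closed_ideal_empty: "closed_ideal P \<Longrightarrow> {} \<in> P"
  by (simp add: closed_ideal_def)

lemma closed_ideal_closed_subset:
  "closed_ideal P \<Longrightarrow> A \<in> P \<Longrightarrow> closed B \<Longrightarrow> B \<subseteq> A \<Longrightarrow> B \<in> P"
  unfolding closed_ideal_def by (elim conjE ballE allE impE) auto

lemma C_cont_subset_C_ideal: "closed_ideal P \<Longrightarrow> C_cont \<subseteq> C_ideal P"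
  by (auto simp: C_cont_iff_discont_points_empty C_ideal_def closed_ideal_empty)

lemma C_ideal_subset_C_cont: "P \<subseteq> isolated_ideal \<Longrightarrow> C_ideal P \<subseteq> C_cont"
proof
  fix f assume "P \<subseteq> isolated_ideal" and "f \<in> C_ideal P"
  then have "closure (discont_points f) \<in> isolated_ideal"
    by (auto simp: C_ideal_def)
  then have "discont_points f \<subseteq> isolated_points"
    using closure_subset unfolding isolated_ideal_def by blast
  then have "discont_points f = {}"
    using discont_points_disjoint_isolated_points[of f] by blast
  then show "f \<in> C_cont"
    by (simp add: C_cont_iff_discont_points_empty)
qed

lemma isolated_ideal_if_C_ideal_subset_C_cont:
  fixes P :: "'a::t1_space set set"
  assumes P: "closed_ideal P" and sub: "C_ideal P \<subseteq> C_cont"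
  shows "P \<subseteq> isolated_ideal"
proof
  fix A assume A: "A \<in> P"
  have "x \<in> isolated_points" if "x \<in> A" for x
  proof -
    let ?f = "indicator {x} :: 'a \<Rightarrow> real"
    have "closure (discont_points ?f) \<subseteq> A"
      using closure_mono[of "discont_points ?f" "{x}"] that
      by (auto simp: discont_points_indicator_singleton)
    then have "?f \<in> C_ideal P"
      using closed_ideal_closed_subset[OF P A] by (simp add: C_ideal_def)
    with sub have "discont_points ?f = {}"
      by (auto simp: C_cont_iff_discont_points_empty)
    then show ?thesis
      by (simp add: discont_points_indicator_singleton)
  qed
  then show "A \<in> isolated_ideal"
    using closed_ideal_closed[OF P A] by (auto simp: isolated_ideal_def)
qed

theorem theorem2p1:
  fixes P :: "'a::t1_space set set"
  assumes "closed_ideal P"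
  shows "C_ideal P = C_cont \<longleftrightarrow> P \<subseteq> isolated_ideal"
proof
  assume "C_ideal P = C_cont"
  then show "P \<subseteq> isolated_ideal"
    using isolated_ideal_if_C_ideal_subset_C_cont[OF assms] by simp
next
  assume "P \<subseteq> isolated_ideal"
  then have "C_ideal P \<subseteq> C_cont"
    by (rule C_ideal_subset_C_cont)
  then show "C_ideal P = C_cont"
    using C_cont_subset_C_ideal[OF assms] by (rule subset_antisym)
qed

end
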